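(* Let $A=(a,ha-d,ha+d)$ with $d,h\in\mathbb{P}$, $\gcd(a,d)=1$, $ha-d>1$, and $r_1=\lfloor\frac{ha-d}{2h}\rfloor$. Then $$\sum_{r=0}^{a-1}x^{N_r}=\frac{1-x^{(ha+d)(r_1+1)}}{1-x^{ha+d}}+\frac{x^{ha-d}\big(1-x^{(ha-d)(a-r_1-1)}\big)}{1-x^{ha-d}}.$$
   Context: For $A=(a,c_1,\dots,c_m)$ of positive integers with $\gcd(A)=1$ and $0\le r\le a-1$, $N_r$ is the least nonnegative integer $a_0\equiv r\pmod a$ that can be written as $\sum_{i=1}^m c_ix_i$ with all $x_i$ nonnegative integers. $\mathbb{P}=\{1,2,\dots\}$. *)

theory Defs
  imports Complex_Main
begin

text \<open>For A = (a, c_1, ..., c_m) (the c_i given as the list cs) and residue r,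
  N a cs r is the least nonnegative integer congruent to r mod a that is a
  nonnegative integer combination of the c_i.\<close>
definition N :: "nat \<Rightarrow> nat list \<Rightarrow> nat \<Rightarrow> nat" where
  "N a cs r = (LEAST n. n mod a = r mod a \<and>
      (\<exists>xs :: nat list. length xs = length cs \<and> n = (\<Sum>i<length cs. cs ! i * xs ! i)))"

end

theory Submission
  imports Defs "HOL-Number_Theory.Cong"
begin

text \<open>Write \<open>b = ha - d\<close> and \<open>c = ha + d\<close>. Then \<open>b \<equiv> -d\<close> and \<open>c \<equiv> d (mod a)\<close>, so
  \<open>ub + vc \<equiv> d(v - u)\<close>; as \<open>d\<close> is invertible modulo \<open>a\<close>, the residue of \<open>dk\<close> (\<open>0 \<le> k < a\<close>)
  is hit exactly when \<open>v - u \<equiv> k\<close>, which forces \<open>v \<ge> k\<close> or \<open>u \<ge> a - k\<close>. Hence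
  \<open>N\<^sub>d\<^sub>k = min (ck) (b(a - k))\<close>, the first term being the smaller one exactly for
  \<open>k \<le> r\<^sub>1\<close>. As \<open>k\<close> runs over all residues, so does \<open>dk\<close>, and the sum splits into two
  geometric series.\<close>

lemma two_generator_combination_iff:
  "(\<exists>xs::nat list. length xs = length [p, q] \<and> n = (\<Sum>i<length [p, q]. [p, q] ! i * xs ! i))
     \<longleftrightarrow> (\<exists>u v. n = p * u + q * v)"
proof
  assume "\<exists>xs::nat list. length xs = length [p, q] \<and> n = (\<Sum>i<length [p, q]. [p, q] ! i * xs ! i)"
  then obtain xs :: "nat list"
    where "length xs = length [p, q]" "n = (\<Sum>i<length [p, q]. [p, q] ! i * xs ! i)"
    by blast
  then show "\<exists>u v. n = p * u + q * v"
    by (auto simp: eval_nat_numeral)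
next
  assume "\<exists>u v. n = p * u + q * v"
  then obtain u v where "n = p * u + q * v"
    by blast
  then show "\<exists>xs::nat list. length xs = length [p, q] \<and> n = (\<Sum>i<length [p, q]. [p, q] ! i * xs ! i)"
    by (intro exI[of _ "[u, v]"]) (simp add: eval_nat_numeral)
qed

lemma cong_less_modulus_le:
  fixes m n a :: nat
  assumes "[m = n] (mod a)" "m < a"
  shows "m \<le> n"
  using assms by (metis cong_def mod_less mod_less_eq_dividend)

lemma N_two_generators:
  fixes a d p q k :: nat
  assumes cop: "coprime a d" and p: "[int p = - int d] (mod int a)" and q: "[q = d] (mod a)"
    and "k < a"
  shows "N a [p, q] (d * k mod a) = min (q * k) (p * (a - k))"
  unfolding N_def two_generator_combination_iff mod_mod_trivial
proof (rule Least_equality)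
  have "[q * k = d * k] (mod a)"
    using q by (simp add: cong_mult)
  moreover have "[p * (a - k) = d * k] (mod a)"
  proof -
    have "[int p * int (a - k) = - int d * (int a - int k)] (mod int a)"
      using cong_mult[OF p cong_refl, of "int (a - k)"] \<open>k < a\<close> by simp
    also have "- int d * (int a - int k) = int (d * k) + (- int d) * int a"
      by (simp add: algebra_simps)
    also have "[\<dots> = int (d * k)] (mod int a)"
      unfolding cong_def by (rule mod_mult_self1)
    finally show ?thesis
      by (simp flip: cong_int_iff)
  qed
  ultimately show "min (q * k) (p * (a - k)) mod a = d * k mod a \<and>
      (\<exists>u v. min (q * k) (p * (a - k)) = p * u + q * v)"
    by (cases "q * k \<le> p * (a - k)") (auto simp: cong_def min_def, metis add_0 mult_0_right,
        metis add_0_right mult_0_right)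
next
  fix n
  assume "n mod a = d * k mod a \<and> (\<exists>u v. n = p * u + q * v)"
  then obtain u v where n_cong: "[n = d * k] (mod a)" and n_eq: "n = p * u + q * v"
    by (auto simp: cong_def)
  have "[int d * int k = int d * (int v - int u)] (mod int a)"
  proof -
    have "[int (d * k) = int n] (mod int a)"
      using cong_sym[OF n_cong] by (simp only: cong_int_iff)
    also have "int n = int p * int u + int q * int v"
      using n_eq by simp
    also have "[\<dots> = - int d * int u + int d * int v] (mod int a)"
      using p q by (intro cong_add cong_mult cong_refl) (simp_all add: cong_int_iff)
    finally show ?thesis
      by (simp add: algebra_simps)
  qed
  then have k_cong: "[int k = int v - int u] (mod int a)"
    using cop by (simp add: cong_mult_lcancel coprime_commute)
  show "min (q * k) (p * (a - k)) \<le> n"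
  proof (cases "u \<le> v")
    case True
    with k_cong have "[k = v - u] (mod a)"
      by (simp flip: cong_int_iff)
    then have "k \<le> v"
      using \<open>k < a\<close> cong_less_modulus_le by fastforce
    then show ?thesis
      using n_eq by (simp add: min_le_iff_disj trans_le_add2)
  next
    case False
    show ?thesis
    proof (cases "k = 0")
      case False
      have "[int a - int k = int u - int v] (mod int a)"
        using cong_diff[OF cong_refl[of "int a"] k_cong] by (simp add: cong_def)
      with \<open>\<not> u \<le> v\<close> \<open>k < a\<close> have "[a - k = u - v] (mod a)"
        by (simp flip: cong_int_iff)
      then have "a - k \<le> u"
        using \<open>k \<noteq> 0\<close> cong_less_modulus_le by fastforce
      then show ?thesis
        using n_eq by (simp add: min_le_iff_disj trans_le_add1)
    qed simp
  qed
qed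

lemma bij_betw_mult_mod:
  fixes a d :: nat
  assumes "coprime a d"
  shows "bij_betw (\<lambda>k. d * k mod a) {..<a} {..<a}"
proof -
  have "inj_on (\<lambda>k. d * k mod a) {..<a}"
  proof (rule inj_onI)
    fix k l :: nat
    assume "k \<in> {..<a}" "l \<in> {..<a}" "d * k mod a = d * l mod a"
    then have "[k = l] (mod a)" "k < a" "l < a"
      using assms by (simp_all add: cong_mult_lcancel_nat coprime_commute flip: cong_def)
    then show "k = l"
      by (rule cong_less_modulus_unique_nat)
  qed
  moreover have "(\<lambda>k. d * k mod a) ` {..<a} \<subseteq> {..<a}"
    by auto
  ultimately show ?thesis
    by (simp add: bij_betw_def endo_inj_surj)
qed

lemma plus_mult_le_minus_mult_iff:
  fixes a d h k :: nat
  assumes "d \<le> h * a" "k \<le> a" "a > 0"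
  shows "(h * a + d) * k \<le> (h * a - d) * (a - k) \<longleftrightarrow> 2 * h * k \<le> h * a - d"
proof -
  have "(h * a + d) * k \<le> (h * a - d) * (a - k) \<longleftrightarrow>
      (h * a + d) * k + (h * a - d) * k \<le> (h * a - d) * (a - k) + (h * a - d) * k"
    by simp
  also have "(h * a + d) * k + (h * a - d) * k = a * (2 * h * k)"
  proof -
    have "h * a + d + (h * a - d) = 2 * h * a"
      using assms by simp
    then show ?thesis
      by (metis add_mult_distrib mult.commute mult.left_commute)
  qed
  also have "(h * a - d) * (a - k) + (h * a - d) * k = a * (h * a - d)"
    using assms by (simp flip: add_mult_distrib2)
  finally show ?thesis
    using assms by simp
qed

lemma sum_power_piecewise_linear:
  fixes x :: "'a::comm_semiring_1"
  assumes "r < a"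
  shows "(\<Sum>k<a. x ^ (if k \<le> r then c * k else b * (a - k))) =
    (\<Sum>k<r + 1. (x ^ c) ^ k) + x ^ b * (\<Sum>j<a - r - 1. (x ^ b) ^ j)"
proof -
  let ?f = "\<lambda>k. x ^ (if k \<le> r then c * k else b * (a - k))"
  have "(\<Sum>k<a. ?f k) = (\<Sum>k<r + 1. ?f k) + (\<Sum>k\<in>{r + 1..<a}. ?f k)"
    unfolding lessThan_atLeast0 by (rule sum.atLeastLessThan_concat[symmetric]) (use assms in auto)
  also have "(\<Sum>k<r + 1. ?f k) = (\<Sum>k<r + 1. (x ^ c) ^ k)"
    by (intro sum.cong) (auto simp: power_mult)
  also have "(\<Sum>k\<in>{r + 1..<a}. ?f k) = (\<Sum>j<a - r - 1. x ^ (b * (j + 1)))"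
    by (rule sum.reindex_bij_witness[where i = "\<lambda>k. a - 1 - k" and j = "\<lambda>j. a - 1 - j"])
      (auto simp flip: Suc_diff_Suc)
  also have "\<dots> = x ^ b * (\<Sum>j<a - r - 1. (x ^ b) ^ j)"
    by (simp add: sum_distrib_left power_add flip: power_mult)
  finally show ?thesis .
qed

theorem mainTheorem13:
  fixes a d h :: nat and x :: complex
  assumes "a > 0" "d > 0" "h > 0" "gcd a d = 1" "h * a - d > 1"
    and "x ^ (h * a + d) \<noteq> 1" "x ^ (h * a - d) \<noteq> 1"
  shows "(\<Sum>r<a. x ^ N a [h * a - d, h * a + d] r) =
    (1 - x ^ ((h * a + d) * ((h * a - d) div (2 * h) + 1))) / (1 - x ^ (h * a + d))
    + x ^ (h * a - d) * (1 - x ^ ((h * a - d) * (a - (h * a - d) div (2 * h) - 1)))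
        / (1 - x ^ (h * a - d))"
proof -
  define b c r1 where "b = h * a - d" and "c = h * a + d" and "r1 = b div (2 * h)"
  have cop: "coprime a d"
    using assms(4) by (simp add: coprime_iff_gcd_eq_1)
  have "d < h * a"
    using assms(5) by simp
  have "b \<le> h * a"
    by (simp add: b_def)
  also have "h * a < a * (2 * h)"
    using assms(1,3) by simp
  finally have "r1 < a"
    using assms(3) by (simp add: r1_def div_less_iff_less_mult)
  have N_dk: "N a [b, c] (d * k mod a) = (if k \<le> r1 then c * k else b * (a - k))"
    if "k < a" for k
  proof -
    have "[int b = - int d] (mod int a)"
      using \<open>d < h * a\<close> by (simp add: b_def cong_iff_dvd_diff)
    moreover have "[c = d] (mod a)"
      by (simp add: c_def cong_def)
    moreover have "k \<le> r1 \<longleftrightarrow> c * k \<le> b * (a - k)"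
      using plus_mult_le_minus_mult_iff[of d h a k] \<open>d < h * a\<close> that assms(3)
      by (simp add: r1_def b_def c_def less_eq_div_iff_mult_less_eq mult.commute)
    ultimately show ?thesis
      using N_two_generators[OF cop _ _ that] by (simp add: min_def)
  qed
  have "(\<Sum>r<a. x ^ N a [b, c] r) = (\<Sum>k<a. x ^ N a [b, c] (d * k mod a))"
    by (rule sum.reindex_bij_betw[OF bij_betw_mult_mod[OF cop], symmetric])
  also have "\<dots> = (\<Sum>k<a. x ^ (if k \<le> r1 then c * k else b * (a - k)))"
    using N_dk by simp
  also have "\<dots> = (\<Sum>k<r1 + 1. (x ^ c) ^ k) + x ^ b * (\<Sum>j<a - r1 - 1. (x ^ b) ^ j)"
    using \<open>r1 < a\<close> by (rule sum_power_piecewise_linear)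
  also have "\<dots> = (1 - x ^ (c * (r1 + 1))) / (1 - x ^ c)
      + x ^ b * (1 - x ^ (b * (a - r1 - 1))) / (1 - x ^ b)"
    using sum_gp_strict[of "x ^ c" "r1 + 1"] sum_gp_strict[of "x ^ b" "a - r1 - 1"] assms(6,7)
    by (simp only: b_def c_def if_False power_mult times_divide_eq_right)
  finally show ?thesis
    unfolding b_def c_def r1_def .
qed

end
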